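(* Let $S$ be a pomonoid and $f:X\to B$ an $S$-poset map. If $\langle 1_X,f\rangle:X\to X\times B$ is a section in $\mathbf{Pos}\text{-}S/B$ (i.e. there is an $S$-poset map $r:X\times B\to X$ with $r\langle 1_X,f\rangle=1_X$ and $f r=\pi_B$), then for every $x\in X$ and $b\in B$ with $f(x)\le b$, the set $\{x'\in f^{-1}(b)\mid x\le x'\}$ has a minimum element.
   Context: A pomonoid is a monoid with a compatible partial order; $S$-posets are posets with a monotone right action of $S$, and $\mathbf{Pos}\text{-}S$ has action-preserving monotone maps as morphisms. $\mathbf{Pos}\text{-}S/B$ is the slice category over the $S$-poset $B$: objects are $S$-poset maps into $B$, morphisms are commuting triangles. $X\times B$ is the product $S$-poset with componentwise order and action, regarded over $B$ via the second projection $\pi_B$. *)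

theory Defs
  imports Main
begin

definition partial_order_rel :: "('a \<Rightarrow> 'a \<Rightarrow> bool) \<Rightarrow> bool" where
  "partial_order_rel le \<longleftrightarrow> reflp le \<and> transp le \<and> antisymp le"

definition pomonoid :: "('s \<Rightarrow> 's \<Rightarrow> 's) \<Rightarrow> 's \<Rightarrow> ('s \<Rightarrow> 's \<Rightarrow> bool) \<Rightarrow> bool" where
  "pomonoid mult one leS \<longleftrightarrow>
     partial_order_rel leS \<and>
     (\<forall>s t u. mult (mult s t) u = mult s (mult t u)) \<and>
     (\<forall>s. mult one s = s \<and> mult s one = s) \<and>
     (\<forall>s t s' t'. leS s t \<longrightarrow> leS s' t' \<longrightarrow> leS (mult s s') (mult t t'))"

definition S_poset :: "('s \<Rightarrow> 's \<Rightarrow> 's) \<Rightarrow> 's \<Rightarrow> ('s \<Rightarrow> 's \<Rightarrow> bool)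
     \<Rightarrow> ('x \<Rightarrow> 'x \<Rightarrow> bool) \<Rightarrow> ('x \<Rightarrow> 's \<Rightarrow> 'x) \<Rightarrow> bool" where
  "S_poset mult one leS le act \<longleftrightarrow>
     partial_order_rel le \<and>
     (\<forall>x. act x one = x) \<and>
     (\<forall>x s t. act (act x s) t = act x (mult s t)) \<and>
     (\<forall>x y s t. le x y \<longrightarrow> leS s t \<longrightarrow> le (act x s) (act y t))"

definition S_poset_map :: "('x \<Rightarrow> 'x \<Rightarrow> bool) \<Rightarrow> ('x \<Rightarrow> 's \<Rightarrow> 'x)
     \<Rightarrow> ('y \<Rightarrow> 'y \<Rightarrow> bool) \<Rightarrow> ('y \<Rightarrow> 's \<Rightarrow> 'y) \<Rightarrow> ('x \<Rightarrow> 'y) \<Rightarrow> bool" where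
  "S_poset_map leX actX leY actY f \<longleftrightarrow>
     (\<forall>x y. leX x y \<longrightarrow> leY (f x) (f y)) \<and>
     (\<forall>x s. f (actX x s) = actY (f x) s)"

definition prod_le :: "('x \<Rightarrow> 'x \<Rightarrow> bool) \<Rightarrow> ('y \<Rightarrow> 'y \<Rightarrow> bool) \<Rightarrow> 'x \<times> 'y \<Rightarrow> 'x \<times> 'y \<Rightarrow> bool" where
  "prod_le leX leY p q \<longleftrightarrow> leX (fst p) (fst q) \<and> leY (snd p) (snd q)"

definition prod_act :: "('x \<Rightarrow> 's \<Rightarrow> 'x) \<Rightarrow> ('y \<Rightarrow> 's \<Rightarrow> 'y) \<Rightarrow> 'x \<times> 'y \<Rightarrow> 's \<Rightarrow> 'x \<times> 'y" where
  "prod_act actX actY p s = (actX (fst p) s, actY (snd p) s)"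

end

theory Submission
  imports Defs
begin

text \<open>
  Let r : X \<times> B \<rightarrow> X witness that the graph map x \<mapsto> (x, f x) is a
  section over B. For x with f x \<le> b, the candidate minimum is m = r (x, b):
  it lies over b because f \<circ> r is the second projection; it is above
  x = r (x, f x) because (x, f x) \<le> (x, b) and r is monotone; and it is below
  every x' over b with x \<le> x', since (x, b) \<le> (x', f x') and r (x', f x') = x'.
\<close>

lemma retraction_gives_fibre_minimum:
  fixes leX :: "'x \<Rightarrow> 'x \<Rightarrow> bool" and leB :: "'b \<Rightarrow> 'b \<Rightarrow> bool"
    and f :: "'x \<Rightarrow> 'b" and r :: "'x \<times> 'b \<Rightarrow> 'x"
  assumes refl_X: "reflp leX" and refl_B: "reflp leB"
    and mono_r: "\<And>p q. prod_le leX leB p q \<Longrightarrow> leX (r p) (r q)"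
    and retract: "\<And>x. r (x, f x) = x"
    and over_B: "\<And>p. f (r p) = snd p"
    and below: "leB (f x) b"
  shows "f (r (x, b)) = b \<and> leX x (r (x, b))
         \<and> (\<forall>x'. f x' = b \<and> leX x x' \<longrightarrow> leX (r (x, b)) x')"
proof (intro conjI allI impI)
  show "f (r (x, b)) = b" using over_B by simp
  have "prod_le leX leB (x, f x) (x, b)"
    using refl_X below by (simp add: prod_le_def reflpD)
  then have "leX (r (x, f x)) (r (x, b))" by (rule mono_r)
  then show "leX x (r (x, b))" by (simp only: retract)
next
  fix x' assume x': "f x' = b \<and> leX x x'"
  then have "prod_le leX leB (x, b) (x', f x')"
    using refl_B by (simp add: prod_le_def reflpD)
  then have "leX (r (x, b)) (r (x', f x'))" by (rule mono_r)
  then show "leX (r (x, b)) x'" by (simp only: retract)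
qed

theorem mainTheorem5:
  fixes mult :: "'s \<Rightarrow> 's \<Rightarrow> 's" and one :: 's and leS :: "'s \<Rightarrow> 's \<Rightarrow> bool"
    and leX :: "'x \<Rightarrow> 'x \<Rightarrow> bool" and actX :: "'x \<Rightarrow> 's \<Rightarrow> 'x"
    and leB :: "'b \<Rightarrow> 'b \<Rightarrow> bool" and actB :: "'b \<Rightarrow> 's \<Rightarrow> 'b"
    and f :: "'x \<Rightarrow> 'b"
  assumes "pomonoid mult one leS"
    and "S_poset mult one leS leX actX"
    and "S_poset mult one leS leB actB"
    and "S_poset_map leX actX leB actB f"
    and "\<exists>r :: 'x \<times> 'b \<Rightarrow> 'x.
           S_poset_map (prod_le leX leB) (prod_act actX actB) leX actX r
           \<and> (\<forall>x. r (x, f x) = x)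
           \<and> (\<forall>p. f (r p) = snd p)"
  shows "\<forall>x b. leB (f x) b \<longrightarrow>
           (\<exists>m. f m = b \<and> leX x m \<and> (\<forall>x'. f x' = b \<and> leX x x' \<longrightarrow> leX m x'))"
proof (intro allI impI)
  fix x b assume below: "leB (f x) b"
  from assms(5) obtain r where r_map: "S_poset_map (prod_le leX leB) (prod_act actX actB) leX actX r"
    and retract: "\<forall>x. r (x, f x) = x" and over_B: "\<forall>p. f (r p) = snd p"
    by blast
  have mono_r: "\<And>p q. prod_le leX leB p q \<Longrightarrow> leX (r p) (r q)"
    using r_map unfolding S_poset_map_def by blast
  have refl_X: "reflp leX" and refl_B: "reflp leB"
    using assms(2,3) unfolding S_poset_def partial_order_rel_def by auto
  have "f (r (x, b)) = b \<and> leX x (r (x, b))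
        \<and> (\<forall>x'. f x' = b \<and> leX x x' \<longrightarrow> leX (r (x, b)) x')"
    using retraction_gives_fibre_minimum[of leX leB r f x b] refl_X refl_B mono_r
      retract over_B below
    by blast
  then show "\<exists>m. f m = b \<and> leX x m \<and> (\<forall>x'. f x' = b \<and> leX x x' \<longrightarrow> leX m x')"
    by blast
qed

end
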